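(* Let $\omega=\frac12(-1+\sqrt3\,i)\in\mathbb{C}$. With relations ordered $\mathcal R_0,\dots,\mathcal R_5$ as in the context, and for a suitable ordering $E_0,\dots,E_5$ of the primitive idempotents (with $E_0=\frac1{|\Phi|}J$), the character tables (rows $E_i$, columns $\mathcal R_j$), followed by the multiplicities $m_i$, are as follows. For $\mathcal X(GU(2,2),\Phi(2,2))$: rows $(1,1,1,2,2,2)$, $(1,\omega,\bar\omega,2,2\bar\omega,2\omega)$, $(1,\bar\omega,\omega,2,2\omega,2\bar\omega)$, $(1,1,1,-1,-1,-1)$, $(1,\omega,\bar\omega,-1,-\bar\omega,-\omega)$, $(1,\bar\omega,\omega,-1,-\omega,-\bar\omega)$, with multiplicities $1,1,1,2,2,2$. For $\mathcal X(GU(3,2),\Phi(3,2))$: rows $(1,1,1,8,8,8)$, $(1,\omega,\bar\omega,-4,-4\bar\omega,-4\omega)$, $(1,\bar\omega,\omega,-4,-4\omega,-4\bar\omega)$, $(1,1,1,-1,-1,-1)$, $(1,\omega,\bar\omega,2,2\bar\omega,2\omega)$, $(1,\bar\omega,\omega,2,2\omega,2\bar\omega)$, with multiplicities $1,3,3,8,6,6$.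
   Context: Let $\Phi=\Phi(n,2)=\{x\in\mathbb{F}_4^n\setminus\{0\}:\langle x,x\rangle=0\}$ with $\langle x,y\rangle=\sum_k x_ky_k^{2}$, and let $\mathcal X(GU(n,2),\Phi(n,2))$ be the association scheme of orbitals of $GU(n,2)$ acting on $\Phi$ by $x\mapsto xU$. Fix a primitive element $\alpha$ of $\mathbb{F}_4$. For $n\in\{2,3\}$ the relations are $\mathcal R_l=\{(x,y):y=\alpha^lx\}$ for $l=0,1,2$ and $\mathcal R_l=\{(x,y):\langle x,y\rangle=\alpha^{l}\}$ for $l=3,4,5$. For a commutative association scheme with adjacency matrices $A_0,\dots,A_d$ and primitive idempotents $E_0,\dots,E_d$ of its Bose–Mesner algebra, the character table (first eigenmatrix) is $P=[p_j(i)]$ where $A_j=\sum_i p_j(i)E_i$; the multiplicity $m_i$ is the rank of $E_i$. *)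

theory Defs
  imports "Jordan_Normal_Form.DL_Rank"
begin

datatype F4 = F0 | F1 | Fa | Fb   (* 0, 1, alpha, alpha^2 ; alpha a fixed primitive element *)

fun f4_add :: "F4 \<Rightarrow> F4 \<Rightarrow> F4" where
  "f4_add F0 y = y"
| "f4_add x F0 = x"
| "f4_add F1 F1 = F0" | "f4_add F1 Fa = Fb" | "f4_add F1 Fb = Fa"
| "f4_add Fa F1 = Fb" | "f4_add Fa Fa = F0" | "f4_add Fa Fb = F1"
| "f4_add Fb F1 = Fa" | "f4_add Fb Fa = F1" | "f4_add Fb Fb = F0"

fun f4_mul :: "F4 \<Rightarrow> F4 \<Rightarrow> F4" where
  "f4_mul F0 y = F0"
| "f4_mul x F0 = F0"
| "f4_mul F1 y = y"
| "f4_mul x F1 = x"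
| "f4_mul Fa Fa = Fb" | "f4_mul Fa Fb = F1"
| "f4_mul Fb Fa = F1" | "f4_mul Fb Fb = Fa"

definition f4_sq :: "F4 \<Rightarrow> F4" where
  "f4_sq x = f4_mul x x"

definition alpha_pow :: "nat \<Rightarrow> F4" where
  "alpha_pow l = (if l mod 3 = 0 then F1 else if l mod 3 = 1 then Fa else Fb)"

definition herm :: "F4 list \<Rightarrow> F4 list \<Rightarrow> F4" where
  "herm x y = foldr f4_add (map2 (\<lambda>a b. f4_mul a (f4_sq b)) x y) F0"

definition vscale :: "F4 \<Rightarrow> F4 list \<Rightarrow> F4 list" where
  "vscale c x = map (f4_mul c) x"

definition phi_list :: "nat \<Rightarrow> F4 list list" where
  "phi_list n = filter (\<lambda>x. x \<noteq> replicate n F0 \<and> herm x x = F0) (List.n_lists n [F0, F1, Fa, Fb])"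

definition Phi :: "nat \<Rightarrow> F4 list set" where
  "Phi n = {x. length x = n \<and> x \<noteq> replicate n F0 \<and> herm x x = F0}"

abbreviation NPhi :: "nat \<Rightarrow> nat" where
  "NPhi n \<equiv> length (phi_list n)"

section \<open>Relations R_0..R_5 (valid for n in {2,3}) and adjacency matrices\<close>

definition rel :: "nat \<Rightarrow> F4 list \<Rightarrow> F4 list \<Rightarrow> bool" where
  "rel l x y = (if l < 3 then y = vscale (alpha_pow l) x else herm x y = alpha_pow l)"

definition adj :: "nat \<Rightarrow> nat \<Rightarrow> complex mat" where
  "adj n l = mat (NPhi n) (NPhi n)
     (\<lambda>(a, b). if rel l (phi_list n ! a) (phi_list n ! b) then 1 else 0)"

definition bm_algebra :: "nat \<Rightarrow> complex mat set" where
  "bm_algebra n = {mat (NPhi n) (NPhi n) (\<lambda>(a, b). \<Sum>j<6. c j * adj n j $$ (a, b)) | c. True}"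

definition prim_idem :: "nat \<Rightarrow> complex mat \<Rightarrow> bool" where
  "prim_idem n E \<longleftrightarrow> E \<in> bm_algebra n \<and> E * E = E \<and> E \<noteq> 0\<^sub>m (NPhi n) (NPhi n) \<and>
     (\<forall>F \<in> bm_algebra n. F * F = F \<longrightarrow> E * F = 0\<^sub>m (NPhi n) (NPhi n) \<or> E * F = E)"

definition char_table :: "nat \<Rightarrow> complex list list \<Rightarrow> nat list \<Rightarrow> bool" where
  "char_table n P m \<longleftrightarrow> (\<exists>E :: nat \<Rightarrow> complex mat.
     (\<forall>i<6. prim_idem n (E i)) \<and> inj_on E {..<6} \<and>
     (\<forall>F. prim_idem n F \<longrightarrow> (\<exists>i<6. F = E i)) \<and>
     E 0 = mat (NPhi n) (NPhi n) (\<lambda>_. 1 / of_nat (NPhi n)) \<and>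
     (\<forall>j<6. \<forall>a<NPhi n. \<forall>b<NPhi n. adj n j $$ (a, b) = (\<Sum>i<6. P ! i ! j * E i $$ (a, b))) \<and>
     (\<forall>i<6. vec_space.rank (NPhi n) (E i) = m ! i))"

definition omega :: complex where
  "omega = (-1 + of_real (sqrt 3) * \<i>) / 2"

end

theory Submission
  imports Defs
begin

text \<open>The Bose--Mesner algebra consists of the matrices that are constant on each relation, and
  such matrices multiply according to the intersection numbers. Suppose \<open>E\<^sub>i = \<Sum>\<^sub>k e\<^sub>i(k) A\<^sub>k\<close>
  with \<open>E\<^sub>i A\<^sub>j = P\<^sub>j(i) E\<^sub>i\<close>, and that the matrices \<open>P\<close> and \<open>(e\<^sub>i(k))\<close> are mutually inverse. Then
  the \<open>E\<^sub>i\<close> are orthogonal idempotents summing to \<open>I\<close> and spanning the algebra, hence exactly its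
  primitive idempotents, and \<open>A\<^sub>j = \<Sum>\<^sub>i P\<^sub>j(i) E\<^sub>i\<close>. Each \<open>E\<^sub>i\<close> factors through \<open>m\<^sub>i\<close> of its own
  columns, so \<open>rank E\<^sub>i \<le> m\<^sub>i\<close>; as \<open>\<Sum> m\<^sub>i = |\<Phi>| = rank I \<le> \<Sum> rank E\<^sub>i\<close>, equality holds.
  For \<open>n = 2, 3\<close> all data (the relation of each pair of points, the intersection numbers, \<open>P\<close>
  and \<open>e\<close> over \<open>\<int>[\<omega>]\<close>, and the factorisations) are finite tables checked by evaluation.\<close>

lemma (in vec_space) rank_mult_le:
  assumes A: "A \<in> carrier_mat n k" and B: "B \<in> carrier_mat k nc"
  shows "rank (A * B) \<le> rank A"
proof -
  have AB: "A * B \<in> carrier_mat n nc" using A B by auto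
  have colsA: "set (cols A) \<subseteq> carrier_vec n" using A cols_dim by blast
  have "set (cols (A * B)) \<subseteq> span (set (cols A))"
  proof
    fix x assume "x \<in> set (cols (A * B))"
    then obtain j where j: "j < nc" "x = col (A * B) j"
      using AB by (metis cols_length cols_nth carrier_matD(2) in_set_conv_nth)
    then have "x = A *\<^sub>v col B j" using A B by auto
    moreover have "col B j \<in> carrier_vec k" using B j by auto
    ultimately have "x \<in> col_space A" using col_space_eq[OF A] A by auto
    then show "x \<in> span (set (cols A))" unfolding col_space_def .
  qed
  then have span_le: "span (set (cols (A * B))) \<subseteq> span (set (cols A))"
    using span_subsetI[OF colsA] by blast
  have subA: "subspace class_ring (span (set (cols A))) V"
    using colsA span_is_subspace by auto
  have "subspace class_ring (span (set (cols (A * B)))) V"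
    using AB cols_dim span_is_subspace by (metis carrier_matD(1))
  then have "subspace class_ring (span (set (cols (A * B)))) (vs (span (set (cols A))))"
    using nested_subspaces subA span_le by blast
  moreover have "vectorspace.fin_dim class_ring (vs (span (set (cols A))))"
    using A fin_dim_span_cols by blast
  moreover have "vectorspace.fin_dim class_ring (span_vs (set (cols (A * B))))"
    using AB fin_dim_span_cols by blast
  ultimately show ?thesis unfolding rank_def
    using vectorspace.subspace_dim subspace_is_vs[OF subA] by fastforce
qed

lemma foldr_add_carrier_mat:
  "(\<And>A. A \<in> set As \<Longrightarrow> A \<in> carrier_mat n nc) \<Longrightarrow> foldr (+) As (0\<^sub>m n nc) \<in> carrier_mat n nc"
  by (induction As) auto

lemma index_foldr_add_mat:
  assumes "\<And>A. A \<in> set As \<Longrightarrow> A \<in> carrier_mat n nc" and "a < n" and "b < nc"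
  shows "foldr (+) As (0\<^sub>m n nc) $$ (a, b) = (\<Sum>A\<leftarrow>As. A $$ (a, b))"
  using assms
proof (induction As)
  case (Cons A As)
  then have "foldr (+) As (0\<^sub>m n nc) \<in> carrier_mat n nc"
    by (intro foldr_add_carrier_mat) auto
  with Cons show ?case by simp
qed simp

lemma (in vec_space) rank_foldr_add_le:
  "(\<And>A. A \<in> set As \<Longrightarrow> A \<in> carrier_mat n nc) \<Longrightarrow>
    rank (foldr (+) As (0\<^sub>m n nc)) \<le> (\<Sum>A\<leftarrow>As. rank A)"
proof (induction As)
  case Nil
  then show ?case by (simp add: rank_0I)
next
  case (Cons A As)
  then have "rank (A + foldr (+) As (0\<^sub>m n nc)) \<le> rank A + rank (foldr (+) As (0\<^sub>m n nc))"
    by (intro rank_subadditive) (auto simp: foldr_add_carrier_mat)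
  with Cons show ?case by simp
qed

lemma sum_le_sum_imp_eq:
  fixes f g :: "'a \<Rightarrow> 'b :: ordered_cancel_comm_monoid_add"
  assumes "finite A" and "\<And>x. x \<in> A \<Longrightarrow> f x \<le> g x" and "sum g A \<le> sum f A" and "x \<in> A"
  shows "f x = g x"
proof (rule ccontr)
  assume "f x \<noteq> g x"
  with assms have "sum f A < sum g A"
    by (intro sum_strict_mono_ex1) (auto intro: order.not_eq_order_implies_strict)
  with assms(3) show False by simp
qed

lemma sum_by_value_pairs:
  fixes c d :: "nat \<Rightarrow> 'a :: comm_semiring_1"
  assumes "finite Z" and "\<And>z. z \<in> Z \<Longrightarrow> ta z < k" and "\<And>z. z \<in> Z \<Longrightarrow> tb z < k"
  shows "(\<Sum>z\<in>Z. c (ta z) * d (tb z)) =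
    (\<Sum>i<k. \<Sum>j<k. c i * d j * of_nat (card {z\<in>Z. ta z = i \<and> tb z = j}))"
proof -
  have "(\<Sum>i<k. \<Sum>j<k. c i * d j * of_nat (card {z\<in>Z. ta z = i \<and> tb z = j}))
      = (\<Sum>i<k. \<Sum>j<k. \<Sum>z\<in>Z. if ta z = i \<and> tb z = j then c i * d j else 0)"
    using assms(1) by (simp add: sum.inter_filter[symmetric] mult.commute)
  also have "\<dots> = (\<Sum>z\<in>Z. \<Sum>i<k. \<Sum>j<k. if ta z = i \<and> tb z = j then c i * d j else 0)"
    by (simp add: sum.swap[of _ Z])
  also have "\<dots> = (\<Sum>z\<in>Z. c (ta z) * d (tb z))"
  proof (rule sum.cong[OF refl])
    fix z assume z: "z \<in> Z"
    have "(\<Sum>i<k. \<Sum>j<k. if ta z = i \<and> tb z = j then c i * d j else 0)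
        = (\<Sum>i<k. if ta z = i then c i * d (tb z) else 0)"
      using assms(3)[OF z] by (intro sum.cong refl) (auto simp: if_distrib sum.delta)
    also have "\<dots> = c (ta z) * d (tb z)" using assms(2)[OF z] by (simp add: sum.delta)
    finally show "(\<Sum>i<k. \<Sum>j<k. if ta z = i \<and> tb z = j then c i * d j else 0) = c (ta z) * d (tb z)" .
  qed
  finally show ?thesis by simp
qed

locale class_table =
  fixes n N :: nat and cls :: "nat \<Rightarrow> nat \<Rightarrow> nat" and isect :: "nat \<Rightarrow> nat \<Rightarrow> nat \<Rightarrow> nat"
  assumes card_Phi: "NPhi n = N"
    and N_pos: "0 < N"
    and cls_lt: "\<And>a b. a < N \<Longrightarrow> b < N \<Longrightarrow> cls a b < 6"
    and rel_iff_cls: "\<And>a b l. a < N \<Longrightarrow> b < N \<Longrightarrow> l < 6 \<Longrightarrow>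
                         rel l (phi_list n ! a) (phi_list n ! b) \<longleftrightarrow> cls a b = l"
    and cls_eq_0_iff: "\<And>a b. a < N \<Longrightarrow> b < N \<Longrightarrow> cls a b = 0 \<longleftrightarrow> a = b"
    and cls_onto: "\<And>k. k < 6 \<Longrightarrow> \<exists>b<N. cls 0 b = k"
    and card_isect: "\<And>a b i j. a < N \<Longrightarrow> b < N \<Longrightarrow> i < 6 \<Longrightarrow> j < 6 \<Longrightarrow>
                       card {z. z < N \<and> cls a z = i \<and> cls z b = j} = isect i j (cls a b)"
    and isect_comm: "\<And>i j k. i < 6 \<Longrightarrow> j < 6 \<Longrightarrow> k < 6 \<Longrightarrow> isect i j k = isect j i k"
begin

definition class_mat :: "(nat \<Rightarrow> complex) \<Rightarrow> complex mat" where
  "class_mat c = mat N N (\<lambda>(a, b). c (cls a b))"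

definition class_prod :: "(nat \<Rightarrow> complex) \<Rightarrow> (nat \<Rightarrow> complex) \<Rightarrow> nat \<Rightarrow> complex" where
  "class_prod c d k = (\<Sum>i<6. \<Sum>j<6. c i * d j * of_nat (isect i j k))"

lemma class_mat_carrier [simp]: "class_mat c \<in> carrier_mat N N"
  and dim_class_mat [simp]: "dim_row (class_mat c) = N" "dim_col (class_mat c) = N"
  by (simp_all add: class_mat_def)

lemma index_class_mat [simp]: "a < N \<Longrightarrow> b < N \<Longrightarrow> class_mat c $$ (a, b) = c (cls a b)"
  by (simp add: class_mat_def)

lemma class_mat_eq_iff: "class_mat c = class_mat d \<longleftrightarrow> (\<forall>k<6. c k = d k)"
proof
  assume eq: "class_mat c = class_mat d"
  show "\<forall>k<6. c k = d k"
  proof (intro allI impI)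
    fix k :: nat assume "k < 6"
    then obtain b where "b < N" "cls 0 b = k" using cls_onto by blast
    then show "c k = d k" using arg_cong[OF eq, of "\<lambda>M. M $$ (0, b)"] N_pos by simp
  qed
qed (auto intro: eq_matI simp: cls_lt)

lemma class_mat_zero: "class_mat (\<lambda>_. 0) = 0\<^sub>m N N"
  by (intro eq_matI) auto

lemma class_mat_nonzero:
  assumes "c 0 \<noteq> 0" shows "class_mat c \<noteq> 0\<^sub>m N N"
proof
  assume "class_mat c = 0\<^sub>m N N"
  then have "class_mat c $$ (0, 0) = 0" using N_pos by simp
  with assms show False using N_pos cls_eq_0_iff[of 0 0] by simp
qed

lemma index_adj: "l < 6 \<Longrightarrow> a < N \<Longrightarrow> b < N \<Longrightarrow> adj n l $$ (a, b) = (if cls a b = l then 1 else 0)"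
  by (simp add: adj_def card_Phi rel_iff_cls)

lemma bm_algebra_iff: "X \<in> bm_algebra n \<longleftrightarrow> (\<exists>c. X = class_mat c)"
proof -
  have "mat (NPhi n) (NPhi n) (\<lambda>(a, b). \<Sum>j<6. c j * adj n j $$ (a, b)) = class_mat c" for c
  proof (rule eq_matI)
    fix a b assume "a < dim_row (class_mat c)" "b < dim_col (class_mat c)"
    then have ab: "a < N" "b < N" by auto
    have "(\<Sum>j<6. c j * adj n j $$ (a, b)) = (\<Sum>j<6. if cls a b = j then c j else 0)"
      using ab by (intro sum.cong refl) (simp add: index_adj)
    also have "\<dots> = c (cls a b)" using cls_lt[OF ab] by (simp add: sum.delta)
    finally show "mat (NPhi n) (NPhi n) (\<lambda>(a, b). \<Sum>j<6. c j * adj n j $$ (a, b)) $$ (a, b)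
        = class_mat c $$ (a, b)"
      using ab by (simp add: card_Phi)
  qed (auto simp: card_Phi)
  then show ?thesis unfolding bm_algebra_def by auto
qed

lemma class_mat_mult: "class_mat c * class_mat d = class_mat (class_prod c d)"
proof (rule eq_matI)
  fix a b assume "a < dim_row (class_mat (class_prod c d))" "b < dim_col (class_mat (class_prod c d))"
  then have ab: "a < N" "b < N" by auto
  have "(class_mat c * class_mat d) $$ (a, b) = (\<Sum>z<N. c (cls a z) * d (cls z b))"
    using ab by (simp add: scalar_prod_def atLeast0LessThan)
  also have "\<dots> = (\<Sum>i<6. \<Sum>j<6. c i * d j * of_nat (card {z\<in>{..<N}. cls a z = i \<and> cls z b = j}))"
    by (rule sum_by_value_pairs) (auto simp: cls_lt ab)
  also have "\<dots> = class_prod c d (cls a b)"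
    unfolding class_prod_def using ab by (intro sum.cong refl) (simp add: card_isect[symmetric])
  finally show "(class_mat c * class_mat d) $$ (a, b) = class_mat (class_prod c d) $$ (a, b)"
    using ab by simp
qed auto

lemma class_mat_mult_comm: "class_mat c * class_mat d = class_mat d * class_mat c"
proof -
  have "class_prod c d k = class_prod d c k" if "k < 6" for k
    unfolding class_prod_def using that
    by (subst sum.swap) (intro sum.cong refl, simp add: isect_comm mult_ac)
  then show ?thesis by (simp add: class_mat_mult class_mat_eq_iff)
qed

end

locale class_spectrum = class_table +
  fixes P :: "complex list list" and idem :: "nat \<Rightarrow> nat \<Rightarrow> complex"
  \<comment> \<open>\<open>idem i k\<close> is the entry of \<open>E\<^sub>i\<close> on the pairs in \<open>R\<^sub>k\<close>; \<open>idem_adj_eigen\<close> says \<open>E\<^sub>i A\<^sub>b = P\<^sub>b(i) E\<^sub>i\<close>.\<close>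
  assumes idem_adj_eigen: "\<And>i b k. i < 6 \<Longrightarrow> b < 6 \<Longrightarrow> k < 6 \<Longrightarrow>
                         (\<Sum>a<6. idem i a * of_nat (isect a b k)) = P ! i ! b * idem i k"
    and eigenvalue_orth: "\<And>i j. i < 6 \<Longrightarrow> j < 6 \<Longrightarrow>
                            (\<Sum>b<6. P ! i ! b * idem j b) = (if i = j then 1 else 0)"
    and class_expansion: "\<And>j k. j < 6 \<Longrightarrow> k < 6 \<Longrightarrow>
                            (\<Sum>i<6. P ! i ! j * idem i k) = (if j = k then 1 else 0)"
    and idem_0: "\<And>k. k < 6 \<Longrightarrow> idem 0 k = 1 / of_nat N"
    and idem_diag_nonzero: "\<And>i. i < 6 \<Longrightarrow> idem i 0 \<noteq> 0"
    and P_col_0: "\<And>i. i < 6 \<Longrightarrow> P ! i ! 0 = 1"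
begin

definition eigval :: "nat \<Rightarrow> (nat \<Rightarrow> complex) \<Rightarrow> complex" where
  "eigval i f = (\<Sum>b<6. P ! i ! b * f b)"

definition idem_mat :: "nat \<Rightarrow> complex mat" where
  "idem_mat i = class_mat (idem i)"

lemma idem_mat_carrier [simp]: "idem_mat i \<in> carrier_mat N N"
  by (simp add: idem_mat_def)

lemma class_prod_idem:
  assumes i: "i < 6" and k: "k < 6"
  shows "class_prod (\<lambda>k. s * idem i k) f k = s * eigval i f * idem i k"
proof -
  have "class_prod (\<lambda>k. s * idem i k) f k = (\<Sum>b<6. \<Sum>a<6. s * f b * (idem i a * of_nat (isect a b k)))"
    unfolding class_prod_def by (subst sum.swap) (simp add: mult_ac)
  also have "\<dots> = (\<Sum>b<6. s * f b * (P ! i ! b * idem i k))"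
    using i k by (intro sum.cong refl) (simp add: sum_distrib_left[symmetric] idem_adj_eigen)
  also have "\<dots> = s * eigval i f * idem i k"
    unfolding eigval_def by (simp add: sum_distrib_left sum_distrib_right mult_ac)
  finally show ?thesis .
qed

lemma scaled_idem_mat_mult:
  "i < 6 \<Longrightarrow> class_mat (\<lambda>k. s * idem i k) * class_mat f = class_mat (\<lambda>k. s * eigval i f * idem i k)"
  by (simp add: class_mat_mult class_mat_eq_iff class_prod_idem)

lemma idem_mat_mult:
  "i < 6 \<Longrightarrow> idem_mat i * class_mat f = class_mat (\<lambda>k. eigval i f * idem i k)"
  using scaled_idem_mat_mult[of i 1] by (simp add: idem_mat_def)

lemma eigval_idem: "i < 6 \<Longrightarrow> j < 6 \<Longrightarrow> eigval i (idem j) = (if i = j then 1 else 0)"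
  by (simp add: eigval_def eigenvalue_orth)

lemma sum_eigval_idem: "k < 6 \<Longrightarrow> (\<Sum>i<6. eigval i f * idem i k) = f k"
proof -
  assume k: "k < 6"
  have "(\<Sum>i<6. eigval i f * idem i k) = (\<Sum>i<6. \<Sum>j<6. f j * (P ! i ! j * idem i k))"
    unfolding eigval_def by (simp add: sum_distrib_right sum_distrib_left mult_ac)
  also have "\<dots> = (\<Sum>j<6. f j * (\<Sum>i<6. P ! i ! j * idem i k))"
    by (subst sum.swap) (simp add: sum_distrib_left)
  also have "\<dots> = (\<Sum>j<6. if j = k then f j else 0)"
    using k by (intro sum.cong refl) (simp add: class_expansion)
  also have "\<dots> = f k" using k by simp
  finally show ?thesis .
qed

lemma eigval_of_idempotent:
  assumes i: "i < 6" and idempotent: "class_mat f * class_mat f = class_mat f"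
  shows "eigval i f = 0 \<or> eigval i f = 1"
proof -
  let ?h = "eigval i f"
  have "class_mat (\<lambda>k. ?h * idem i k) = idem_mat i * (class_mat f * class_mat f)"
    by (simp add: idempotent idem_mat_mult i)
  also have "\<dots> = (idem_mat i * class_mat f) * class_mat f"
    by (simp add: idem_mat_def assoc_mult_mat[of _ N N _ N _ N])
  also have "\<dots> = class_mat (\<lambda>k. ?h * ?h * idem i k)"
    by (simp add: idem_mat_mult scaled_idem_mat_mult i)
  finally have "?h * idem i 0 = ?h * ?h * idem i 0" by (simp add: class_mat_eq_iff)
  then show ?thesis using idem_diag_nonzero[OF i] by (auto simp: algebra_simps)
qed

lemma idem_mat_idempotent: "i < 6 \<Longrightarrow> idem_mat i * idem_mat i = idem_mat i"
  by (simp add: idem_mat_def idem_mat_mult[unfolded idem_mat_def] eigval_idem)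

lemma prim_idem_idem_mat:
  assumes i: "i < 6" shows "prim_idem n (idem_mat i)"
  unfolding prim_idem_def
proof (intro conjI ballI impI)
  show "idem_mat i \<in> bm_algebra n" by (auto simp: bm_algebra_iff idem_mat_def)
  show "idem_mat i * idem_mat i = idem_mat i" using i by (rule idem_mat_idempotent)
  show "idem_mat i \<noteq> 0\<^sub>m (NPhi n) (NPhi n)"
    unfolding idem_mat_def card_Phi using idem_diag_nonzero[OF i] by (rule class_mat_nonzero)
  fix F assume "F \<in> bm_algebra n" and "F * F = F"
  then obtain f where f: "F = class_mat f" and "class_mat f * class_mat f = class_mat f"
    by (auto simp: bm_algebra_iff)
  then have "eigval i f = 0 \<or> eigval i f = 1" using eigval_of_idempotent[OF i] by blast
  then show "idem_mat i * F = 0\<^sub>m (NPhi n) (NPhi n) \<or> idem_mat i * F = idem_mat i"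
    using idem_mat_mult[OF i, of f] by (auto simp: f card_Phi class_mat_zero idem_mat_def)
qed

lemma inj_on_idem_mat: "inj_on idem_mat {..<6}"
proof (rule inj_onI)
  fix i j assume "i \<in> {..<6}" and "j \<in> {..<6}" and "idem_mat i = idem_mat j"
  then have "eigval i (idem i) = eigval i (idem j)"
    by (simp add: idem_mat_def class_mat_eq_iff eigval_def)
  with \<open>i \<in> {..<6}\<close> \<open>j \<in> {..<6}\<close> show "i = j" by (auto simp: eigval_idem split: if_splits)
qed

lemma prim_idem_eq_idem_mat:
  assumes F: "prim_idem n F" shows "\<exists>i<6. F = idem_mat i"
proof -
  obtain f where f: "F = class_mat f" and FF: "class_mat f * class_mat f = class_mat f"
    and F_nonzero: "class_mat f \<noteq> 0\<^sub>m N N"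
    and F_prim: "\<And>G. G \<in> bm_algebra n \<Longrightarrow> G * G = G \<Longrightarrow> F * G = 0\<^sub>m N N \<or> F * G = F"
  proof -
    from F have "F \<in> bm_algebra n" "F * F = F" "F \<noteq> 0\<^sub>m N N"
      and F_prim: "\<And>G. G \<in> bm_algebra n \<Longrightarrow> G * G = G \<Longrightarrow> F * G = 0\<^sub>m N N \<or> F * G = F"
      by (auto simp: prim_idem_def card_Phi)
    with that show thesis by (auto simp: bm_algebra_iff)
  qed
  obtain i where i: "i < 6" and nonzero: "eigval i f \<noteq> 0"
  proof -
    have "\<not> (\<forall>i<6. eigval i f = 0)"
    proof
      assume "\<forall>i<6. eigval i f = 0"
      then have "\<forall>k<6. f k = 0" using sum_eigval_idem[of _ f] by simp
      then show False using F_nonzero by (simp add: class_mat_zero[symmetric] class_mat_eq_iff)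
    qed
    with that show thesis by blast
  qed
  have "F * idem_mat i = idem_mat i * class_mat f"
    unfolding f idem_mat_def by (rule class_mat_mult_comm)
  then have FE: "F * idem_mat i = class_mat (\<lambda>k. eigval i f * idem i k)"
    using idem_mat_mult[OF i] by simp
  moreover have "F * idem_mat i \<noteq> 0\<^sub>m N N"
    unfolding FE by (rule class_mat_nonzero) (simp add: nonzero idem_diag_nonzero[OF i])
  ultimately have "F = class_mat (\<lambda>k. eigval i f * idem i k)"
    using F_prim[of "idem_mat i"] prim_idem_idem_mat[OF i] by (auto simp: prim_idem_def)
  moreover have "eigval i f = 1" using eigval_of_idempotent[OF i FF] nonzero by simp
  ultimately show ?thesis using i by (auto simp: idem_mat_def)
qed

lemma sum_idem_mat: "foldr (+) (map idem_mat [0..<6]) (0\<^sub>m N N) = 1\<^sub>m N"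
proof -
  let ?S = "foldr (+) (map idem_mat [0..<6]) (0\<^sub>m N N)"
  have "?S \<in> carrier_mat N N" by (rule foldr_add_carrier_mat) auto
  moreover have "?S $$ (a, b) = 1\<^sub>m N $$ (a, b)" if ab: "a < N" "b < N" for a b
  proof -
    have "?S $$ (a, b) = (\<Sum>i<6. idem i (cls a b))"
      using ab by (subst index_foldr_add_mat[of _ N N]) (auto simp: idem_mat_def lessThan_atLeast0 sum_list_sum_nth)
    also have "\<dots> = (\<Sum>i<6. P ! i ! 0 * idem i (cls a b))" by (simp add: P_col_0)
    also have "\<dots> = 1\<^sub>m N $$ (a, b)" using ab cls_lt[OF ab] by (simp add: class_expansion cls_eq_0_iff)
    finally show ?thesis .
  qed
  ultimately show ?thesis by (intro eq_matI) auto
qed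

end

locale class_char_table = class_spectrum +
  fixes m :: "nat list" and K :: "nat \<Rightarrow> nat list" and R :: "nat \<Rightarrow> nat \<Rightarrow> nat \<Rightarrow> complex"
  assumes idem_factor: "\<And>i a b. i < 6 \<Longrightarrow> a < N \<Longrightarrow> b < N \<Longrightarrow>
                        (\<Sum>k<m ! i. idem i (cls a (K i ! k)) * R i k b) = idem i (cls a b)"
    and sum_m: "(\<Sum>i<6. m ! i) = N"
begin

lemma idem_mat_factor:
  assumes i: "i < 6"
  shows "idem_mat i = mat N (m ! i) (\<lambda>(a, k). idem i (cls a (K i ! k))) * mat (m ! i) N (\<lambda>(k, b). R i k b)"
    (is "_ = ?X * ?Y")
proof (rule eq_matI)
  fix a b assume "a < dim_row (?X * ?Y)" "b < dim_col (?X * ?Y)"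
  then have ab: "a < N" "b < N" by auto
  have "(?X * ?Y) $$ (a, b) = (\<Sum>k<m ! i. idem i (cls a (K i ! k)) * R i k b)"
    using ab by (simp add: scalar_prod_def atLeast0LessThan)
  then show "idem_mat i $$ (a, b) = (?X * ?Y) $$ (a, b)"
    using idem_factor[OF i ab] ab by (simp add: idem_mat_def)
qed (auto simp: idem_mat_def)

lemma rank_idem_mat_le:
  assumes i: "i < 6" shows "vec_space.rank N (idem_mat i) \<le> m ! i"
proof -
  let ?X = "mat N (m ! i) (\<lambda>(a, k). idem i (cls a (K i ! k)))"
  let ?Y = "mat (m ! i) N (\<lambda>(k, b). R i k b)"
  have "vec_space.rank N (?X * ?Y) \<le> vec_space.rank N ?X"
    by (rule vec_space.rank_mult_le) auto
  also have "\<dots> \<le> m ! i" by (rule vec_space.rank_le_nc) auto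
  finally show ?thesis using idem_mat_factor[OF i] by simp
qed

lemma rank_idem_mat: assumes i: "i < 6" shows "vec_space.rank N (idem_mat i) = m ! i"
proof -
  have "(\<Sum>i<6. m ! i) = vec_space.rank N (1\<^sub>m N :: complex mat)"
    using vec_space.low_rank_det_zero[of "1\<^sub>m N :: complex mat" N] by (simp add: sum_m)
  also have "\<dots> \<le> (\<Sum>A\<leftarrow>map idem_mat [0..<6]. vec_space.rank N A)"
    unfolding sum_idem_mat[symmetric] by (rule vec_space.rank_foldr_add_le) auto
  also have "\<dots> = (\<Sum>i<6. vec_space.rank N (idem_mat i))"
    by (simp add: lessThan_atLeast0 sum_list_sum_nth)
  finally show ?thesis
    using sum_le_sum_imp_eq[of "{..<6}" "\<lambda>i. vec_space.rank N (idem_mat i)" "\<lambda>i. m ! i"]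
      rank_idem_mat_le i by auto
qed

theorem char_table: "char_table n P m"
  unfolding char_table_def
proof (intro exI[of _ idem_mat] conjI allI impI)
  show "idem_mat 0 = mat (NPhi n) (NPhi n) (\<lambda>_. 1 / of_nat (NPhi n))"
    by (rule eq_matI) (auto simp: idem_mat_def card_Phi idem_0 cls_lt)
  fix j a b :: nat assume j: "j < 6" and "a < NPhi n" and "b < NPhi n"
  then have ab: "a < N" "b < N" using card_Phi by auto
  have "(\<Sum>i<6. P ! i ! j * idem_mat i $$ (a, b)) = (if j = cls a b then 1 else 0)"
    using ab class_expansion[OF j cls_lt[OF ab]] by (simp add: idem_mat_def)
  then show "adj n j $$ (a, b) = (\<Sum>i<6. P ! i ! j * idem_mat i $$ (a, b))"
    using index_adj[OF j ab] by auto
qed (use prim_idem_idem_mat inj_on_idem_mat prim_idem_eq_idem_mat rank_idem_mat card_Phi in auto)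

end

lemma omega_sq: "omega * omega = -1 - omega"
  by (simp add: omega_def complex_eq_iff algebra_simps power2_eq_square)

lemma cnj_omega: "cnj omega = -1 - omega"
  by (simp add: omega_def complex_eq_iff)

text \<open>A pair \<open>(a, b)\<close> stands for \<open>a + b\<omega>\<close>; \<open>eis_mul\<close> uses \<open>\<omega>\<^sup>2 = -1 - \<omega>\<close>.\<close>

type_synonym eis = "int \<times> int"

fun eis_val :: "eis \<Rightarrow> complex" where
  "eis_val (a, b) = of_int a + of_int b * omega"

fun eis_add :: "eis \<Rightarrow> eis \<Rightarrow> eis" where
  "eis_add (a, b) (c, d) = (a + c, b + d)"

fun eis_mul :: "eis \<Rightarrow> eis \<Rightarrow> eis" where
  "eis_mul (a, b) (c, d) = (a * c - b * d, a * d + b * c - b * d)"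

definition eis_sum :: "eis list \<Rightarrow> eis" where
  "eis_sum xs = foldr eis_add xs (0, 0)"

lemma eis_val_mul: "eis_val (eis_mul p q) = eis_val p * eis_val q"
proof (cases p; cases q)
  fix a b c d assume pq: "p = (a, b)" "q = (c, d)"
  have "eis_val p * eis_val q = of_int (a * c) + of_int (a * d + b * c) * omega + of_int (b * d) * (omega * omega)"
    by (simp add: pq algebra_simps)
  then show ?thesis by (simp add: pq omega_sq algebra_simps)
qed

lemma eis_val_sum: "eis_val (eis_sum xs) = (\<Sum>x\<leftarrow>xs. eis_val x)"
proof (induction xs)
  case (Cons x xs)
  then show ?case by (cases x; cases "eis_sum xs") (simp add: eis_sum_def algebra_simps)
qed (simp add: eis_sum_def)

lemma sum_eis_val_upt: "(\<Sum>i<k. eis_val (g i)) = eis_val (eis_sum (map g [0..<k]))"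
  by (simp add: eis_val_sum sum_list_sum_nth lessThan_atLeast0)

lemma eis_val_eq_0_iff: "eis_val p = 0 \<longleftrightarrow> p = (0, 0)"
proof (cases p)
  case (Pair a b)
  have im: "Im (eis_val p) = of_int b * sqrt 3 / 2" and re: "Re (eis_val p) = of_int a - of_int b / 2"
    by (simp_all add: Pair omega_def)
  show ?thesis
  proof
    assume "eis_val p = 0"
    with im re have "b = 0" "a = 0" by simp_all
    then show "p = (0, 0)" by (simp add: Pair)
  qed simp
qed

datatype cls = C0 | C1 | C2 | C3 | C4 | C5

fun cls_index :: "cls \<Rightarrow> nat" where
  "cls_index C0 = 0" | "cls_index C1 = 1" | "cls_index C2 = 2"
| "cls_index C3 = 3" | "cls_index C4 = 4" | "cls_index C5 = 5"

definition index_cls :: "nat \<Rightarrow> cls" where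
  "index_cls k = [C0, C1, C2, C3, C4, C5] ! k"

definition all_cls :: "cls list" where
  "all_cls = [C0, C1, C2, C3, C4, C5]"

lemma cls_index_lt [simp]: "cls_index t < 6"
  by (cases t) auto

lemma index_cls_cls_index [simp]: "index_cls (cls_index t) = t"
  by (cases t) (auto simp: index_cls_def)

lemma cls_index_index_cls [simp]: "k < 6 \<Longrightarrow> cls_index (index_cls k) = k"
  by (auto simp: index_cls_def less_Suc_eq numeral_eq_Suc)

lemma eq_index_cls_iff: "k < 6 \<Longrightarrow> t = index_cls k \<longleftrightarrow> cls_index t = k"
  by auto

lemma set_all_cls [simp]: "set all_cls = UNIV"
  using cls.exhaust by (auto simp: all_cls_def)

lemma sum_index_cls: "(\<Sum>k<6. f (index_cls k)) = (\<Sum>t\<leftarrow>all_cls. f t)"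
  by (simp add: all_cls_def index_cls_def eval_nat_numeral add_ac)

type_synonym 'a per_cls = "'a \<times> 'a \<times> 'a \<times> 'a \<times> 'a \<times> 'a"

fun pick :: "'a per_cls \<Rightarrow> cls \<Rightarrow> 'a" where
  "pick (a, b, c, d, e, f) C0 = a" | "pick (a, b, c, d, e, f) C1 = b" | "pick (a, b, c, d, e, f) C2 = c"
| "pick (a, b, c, d, e, f) C3 = d" | "pick (a, b, c, d, e, f) C4 = e" | "pick (a, b, c, d, e, f) C5 = f"

fun modify :: "cls \<Rightarrow> ('a \<Rightarrow> 'a) \<Rightarrow> 'a per_cls \<Rightarrow> 'a per_cls" where
  "modify C0 g (a, b, c, d, e, f) = (g a, b, c, d, e, f)"
| "modify C1 g (a, b, c, d, e, f) = (a, g b, c, d, e, f)"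
| "modify C2 g (a, b, c, d, e, f) = (a, b, g c, d, e, f)"
| "modify C3 g (a, b, c, d, e, f) = (a, b, c, g d, e, f)"
| "modify C4 g (a, b, c, d, e, f) = (a, b, c, d, g e, f)"
| "modify C5 g (a, b, c, d, e, f) = (a, b, c, d, e, g f)"

lemma pick_modify: "pick (modify s g x) t = (if s = t then g (pick x t) else pick x t)"
  by (cases x; cases s; cases t) auto

fun pair_count :: "(cls \<times> cls) list \<Rightarrow> nat per_cls per_cls" where
  "pair_count [] = (let z = (0, 0, 0, 0, 0, 0) in (z, z, z, z, z, z))"
| "pair_count ((s, t) # ps) = modify s (modify t Suc) (pair_count ps)"

lemma pick_pair_count: "pick (pick (pair_count ps) s) t = length (filter (\<lambda>p. p = (s, t)) ps)"
proof (induction ps)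
  case Nil
  show ?case by (cases s; cases t) (simp_all add: Let_def)
next
  case (Cons p ps)
  then show ?case by (cases p) (auto simp: pick_modify)
qed

definition rel_class :: "F4 list \<Rightarrow> F4 list \<Rightarrow> cls \<Rightarrow> bool" where
  "rel_class x y t \<longleftrightarrow> (\<forall>l\<in>set [0..<6]. rel l x y \<longleftrightarrow> t = index_cls l)"

text \<open>All hypotheses below are decidable statements about finite tables. The entry of \<open>E\<^sub>i\<close> on the
  pairs in \<open>R\<^sub>k\<close> is \<open>pick (idem ! i) C\<^sub>k / den\<close>, and \<open>Rf ! i ! b ! k\<close> is entry \<open>(k, b)\<close> of the right
  factor of \<open>E\<^sub>i\<close>, whose left factor consists of the columns \<open>K ! i\<close> of \<open>E\<^sub>i\<close>.\<close>

locale scheme_certificate =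
  fixes n N :: nat and T :: "cls list list" and isect :: "cls \<Rightarrow> nat per_cls per_cls"
    and eig :: "eis list list" and den :: int and idem :: "eis per_cls list"
    and m :: "nat list" and K :: "nat list list" and Rf :: "eis list list list"
  assumes sizes: "0 < N \<and> length (phi_list n) = N \<and> length T = N \<and> list_all (\<lambda>r. length r = N) T"
    and rel_class_T: "list_all2 (\<lambda>x row. list_all2 (rel_class x) (phi_list n) row) (phi_list n) T"
    and diag_T: "map (map (\<lambda>t. t = C0)) T = map (\<lambda>a. map (\<lambda>b. a = b) [0..<N]) [0..<N]"
    and pair_count_T: "list_all (\<lambda>row. list_all2 (\<lambda>col t. pair_count (zip row col) = isect t)
                         (List.transpose T) row) T"
    and isect_comm_check: "\<forall>s\<in>set all_cls. \<forall>t\<in>set all_cls. \<forall>u\<in>set all_cls.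
       pick (pick (isect u) s) t = pick (pick (isect u) t) s"
    and row_0_onto: "set (T ! 0) = set all_cls"
    and eig_shape: "length eig = 6 \<and> list_all (\<lambda>r. length r = 6) eig"
    and idem_adj_eigen_check: "\<forall>i\<in>set [0..<6]. \<forall>b\<in>set [0..<6]. \<forall>u\<in>set all_cls.
       eis_sum (map (\<lambda>s. eis_mul (pick (idem ! i) s) (int (pick (pick (isect u) s) (index_cls b)), 0)) all_cls)
         = eis_mul (eig ! i ! b) (pick (idem ! i) u)"
    and eigenvalue_orth_check: "\<forall>i\<in>set [0..<6]. \<forall>j\<in>set [0..<6].
       eis_sum (map (\<lambda>b. eis_mul (eig ! i ! b) (pick (idem ! j) (index_cls b))) [0..<6])
         = (if i = j then (den, 0) else (0, 0))"
    and class_expansion_check: "\<forall>j\<in>set [0..<6]. \<forall>u\<in>set all_cls.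
       eis_sum (map (\<lambda>i. eis_mul (eig ! i ! j) (pick (idem ! i) u)) [0..<6])
         = (if index_cls j = u then (den, 0) else (0, 0))"
    and idem_0_check: "\<forall>u\<in>set all_cls. eis_mul (int N, 0) (pick (idem ! 0) u) = (den, 0)"
    and idem_diag_nonzero_check: "\<forall>i\<in>set [0..<6]. pick (idem ! i) C0 \<noteq> (0, 0)"
    and eig_col_0: "\<forall>i\<in>set [0..<6]. eig ! i ! 0 = (1, 0)"
    and factor_shape: "\<forall>i\<in>set [0..<6]. length (K ! i) = m ! i \<and> length (Rf ! i) = N
                          \<and> list_all (\<lambda>r. length r = m ! i) (Rf ! i)"
    and idem_factor_check: "\<forall>i\<in>set [0..<6]. list_all (\<lambda>row. list_all2 (\<lambda>r t.
       eis_sum (map2 (\<lambda>k x. eis_mul (pick (idem ! i) (row ! k)) x) (K ! i) r) = pick (idem ! i) t)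
         (Rf ! i) row) T"
    and sum_m_check: "(\<Sum>i<6. m ! i) = N"
    and den_nonzero: "den \<noteq> 0"
begin

definition cls_of :: "nat \<Rightarrow> nat \<Rightarrow> nat" where
  "cls_of a b = cls_index (T ! a ! b)"

definition isect_num :: "nat \<Rightarrow> nat \<Rightarrow> nat \<Rightarrow> nat" where
  "isect_num i j k = pick (pick (isect (index_cls k)) (index_cls i)) (index_cls j)"

definition idem_val :: "nat \<Rightarrow> nat \<Rightarrow> complex" where
  "idem_val i k = eis_val (pick (idem ! i) (index_cls k)) / of_int den"

lemma length_row: "a < N \<Longrightarrow> length (T ! a) = N"
  using sizes by (simp add: list_all_length)

lemma transpose_T: "List.transpose T = map (\<lambda>b. map (\<lambda>z. T ! z ! b) [0..<N]) [0..<N]"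
  using sizes length_row by (subst transpose_rectangle[of _ N]) auto

lemma eis_val_eig: "i < 6 \<Longrightarrow> b < 6 \<Longrightarrow> map (map eis_val) eig ! i ! b = eis_val (eig ! i ! b)"
  using eig_shape by (simp add: list_all_length)

lemma rel_iff_cls_of:
  assumes a: "a < N" and b: "b < N" and l: "l < 6"
  shows "rel l (phi_list n ! a) (phi_list n ! b) \<longleftrightarrow> cls_of a b = l"
proof -
  have "list_all2 (rel_class (phi_list n ! a)) (phi_list n) (T ! a)"
    using list_all2_nthD[OF rel_class_T] a sizes by simp
  then have "rel_class (phi_list n ! a) (phi_list n ! b) (T ! a ! b)"
    using list_all2_nthD b sizes by fastforce
  then show ?thesis using l by (simp add: rel_class_def cls_of_def eq_index_cls_iff)
qed

lemma cls_of_eq_0_iff: "a < N \<Longrightarrow> b < N \<Longrightarrow> cls_of a b = 0 \<longleftrightarrow> a = b"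
  using arg_cong[OF diag_T, of "\<lambda>M. M ! a ! b"] length_row sizes
  by (simp add: cls_of_def eq_index_cls_iff[symmetric] index_cls_def)

lemma cls_of_onto: "k < 6 \<Longrightarrow> \<exists>b<N. cls_of 0 b = k"
  using row_0_onto length_row[of 0] sizes
  by (auto simp: cls_of_def in_set_conv_nth set_eq_iff eq_index_cls_iff[symmetric])

lemma card_isect_num:
  assumes a: "a < N" and b: "b < N" and i: "i < 6" and j: "j < 6"
  shows "card {z. z < N \<and> cls_of a z = i \<and> cls_of z b = j} = isect_num i j (cls_of a b)"
proof -
  let ?col = "map (\<lambda>z. T ! z ! b) [0..<N]"
  have "list_all2 (\<lambda>col t. pair_count (zip (T ! a) col) = isect t) (List.transpose T) (T ! a)"
    using pair_count_T a sizes by (simp add: list_all_length)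
  then have "pair_count (zip (T ! a) ?col) = isect (T ! a ! b)"
    using b by (auto simp: transpose_T list_all2_conv_all_nth)
  then have "isect_num i j (cls_of a b)
      = length (filter (\<lambda>p. p = (index_cls i, index_cls j)) (zip (T ! a) ?col))"
    using pick_pair_count[of "zip (T ! a) ?col" "index_cls i" "index_cls j"]
    by (simp add: isect_num_def cls_of_def)
  also have "\<dots> = card {z. z < N \<and> T ! a ! z = index_cls i \<and> T ! z ! b = index_cls j}"
    using length_row[OF a] by (simp add: length_filter_conv_card) (intro arg_cong[where f = card], auto)
  also have "\<dots> = card {z. z < N \<and> cls_of a z = i \<and> cls_of z b = j}"
    using i j by (simp add: cls_of_def eq_index_cls_iff)
  finally show ?thesis by simp
qed

lemma isect_num_comm: "i < 6 \<Longrightarrow> j < 6 \<Longrightarrow> k < 6 \<Longrightarrow> isect_num i j k = isect_num j i k"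
  using isect_comm_check by (simp add: isect_num_def)

lemma idem_val_adj_eigen:
  assumes i: "i < 6" and b: "b < 6" and k: "k < 6"
  shows "(\<Sum>a<6. idem_val i a * of_nat (isect_num a b k)) = map (map eis_val) eig ! i ! b * idem_val i k"
proof -
  let ?g = "\<lambda>s. eis_mul (pick (idem ! i) s) (int (pick (pick (isect (index_cls k)) s) (index_cls b)), 0)"
  have "(\<Sum>a<6. idem_val i a * of_nat (isect_num a b k)) = (\<Sum>a<6. eis_val (?g (index_cls a))) / of_int den"
    by (simp add: idem_val_def isect_num_def eis_val_mul sum_divide_distrib)
  also have "\<dots> = (\<Sum>s\<leftarrow>all_cls. eis_val (?g s)) / of_int den"
    using sum_index_cls[of "\<lambda>s. eis_val (?g s)"] by simp
  also have "\<dots> = eis_val (eis_sum (map ?g all_cls)) / of_int den"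
    by (simp only: eis_val_sum map_map o_def)
  also have "\<dots> = map (map eis_val) eig ! i ! b * idem_val i k"
    using idem_adj_eigen_check i b by (simp add: eis_val_mul idem_val_def eis_val_eig)
  finally show ?thesis .
qed

lemma eigenvalue_orth_val:
  assumes i: "i < 6" and j: "j < 6"
  shows "(\<Sum>b<6. map (map eis_val) eig ! i ! b * idem_val j b) = (if i = j then 1 else 0)"
proof -
  let ?g = "\<lambda>b. eis_mul (eig ! i ! b) (pick (idem ! j) (index_cls b))"
  have "(\<Sum>b<6. map (map eis_val) eig ! i ! b * idem_val j b) = (\<Sum>b<6. eis_val (?g b)) / of_int den"
    by (simp add: sum_divide_distrib eis_val_eig i idem_val_def eis_val_mul)
  also have "\<dots> = eis_val (eis_sum (map ?g [0..<6])) / of_int den"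
    using sum_eis_val_upt[where g = ?g and k = 6] by simp
  finally show ?thesis using eigenvalue_orth_check i j den_nonzero by simp
qed

lemma class_expansion_val:
  assumes j: "j < 6" and k: "k < 6"
  shows "(\<Sum>i<6. map (map eis_val) eig ! i ! j * idem_val i k) = (if j = k then 1 else 0)"
proof -
  let ?g = "\<lambda>i. eis_mul (eig ! i ! j) (pick (idem ! i) (index_cls k))"
  have "(\<Sum>i<6. map (map eis_val) eig ! i ! j * idem_val i k) = (\<Sum>i<6. eis_val (?g i)) / of_int den"
    by (simp add: sum_divide_distrib eis_val_eig j idem_val_def eis_val_mul)
  also have "\<dots> = eis_val (eis_sum (map ?g [0..<6])) / of_int den"
    using sum_eis_val_upt[where g = ?g and k = 6] by simp
  moreover have "index_cls j = index_cls k \<longleftrightarrow> j = k"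
    using j k by (metis cls_index_index_cls)
  ultimately show ?thesis using class_expansion_check j den_nonzero by simp
qed

lemma idem_val_0: "k < 6 \<Longrightarrow> idem_val 0 k = 1 / of_nat N"
  using arg_cong[OF idem_0_check[rule_format, of "index_cls k"], of eis_val] sizes den_nonzero
  by (simp add: idem_val_def eis_val_mul field_simps)

lemma idem_val_diag_nonzero: "i < 6 \<Longrightarrow> idem_val i 0 \<noteq> 0"
  using idem_diag_nonzero_check den_nonzero by (simp add: idem_val_def index_cls_def eis_val_eq_0_iff)

lemma eig_val_col_0: "i < 6 \<Longrightarrow> map (map eis_val) eig ! i ! 0 = 1"
  using eig_col_0 by (simp add: eis_val_eig)

lemma idem_val_factor:
  assumes i: "i < 6" and a: "a < N" and b: "b < N"
  shows "(\<Sum>k<m ! i. idem_val i (cls_of a (K ! i ! k)) * eis_val (Rf ! i ! b ! k)) = idem_val i (cls_of a b)"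
proof -
  let ?g = "\<lambda>k x. eis_mul (pick (idem ! i) (T ! a ! k)) x"
  have lengths: "length (K ! i) = m ! i" "length (Rf ! i ! b) = m ! i"
    using factor_shape i b by (auto simp: list_all_length)
  have "list_all2 (\<lambda>r t. eis_sum (map2 ?g (K ! i) r) = pick (idem ! i) t) (Rf ! i) (T ! a)"
    using idem_factor_check i a sizes by (simp add: list_all_length)
  then have check: "eis_sum (map2 ?g (K ! i) (Rf ! i ! b)) = pick (idem ! i) (T ! a ! b)"
    using b length_row[OF a] by (auto simp: list_all2_conv_all_nth)
  have "(\<Sum>k<m ! i. idem_val i (cls_of a (K ! i ! k)) * eis_val (Rf ! i ! b ! k))
      = (\<Sum>k<m ! i. eis_val (?g (K ! i ! k) (Rf ! i ! b ! k))) / of_int den"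
    by (simp add: sum_divide_distrib idem_val_def cls_of_def eis_val_mul)
  also have "\<dots> = eis_val (eis_sum (map (\<lambda>k. ?g (K ! i ! k) (Rf ! i ! b ! k)) [0..<m ! i])) / of_int den"
    using sum_eis_val_upt[where g = "\<lambda>k. ?g (K ! i ! k) (Rf ! i ! b ! k)" and k = "m ! i"] by simp
  also have "map (\<lambda>k. ?g (K ! i ! k) (Rf ! i ! b ! k)) [0..<m ! i] = map2 ?g (K ! i) (Rf ! i ! b)"
    using lengths by (intro nth_equalityI) auto
  finally show ?thesis using check by (simp add: idem_val_def cls_of_def)
qed

end

sublocale scheme_certificate \<subseteq> class_char_table n N cls_of isect_num "map (map eis_val) eig" idem_val
    m "(!) K" "\<lambda>i k b. eis_val (Rf ! i ! b ! k)"
  by unfold_locales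
    (use sizes rel_iff_cls_of cls_of_eq_0_iff cls_of_onto card_isect_num isect_num_comm idem_val_adj_eigen
      eigenvalue_orth_val class_expansion_val idem_val_0 idem_val_diag_nonzero eig_val_col_0
      idem_val_factor sum_m_check in \<open>auto simp: cls_of_def\<close>)

definition cls_table_2 :: "cls list list" where
  "cls_table_2 =
    [[C0, C4, C5, C4, C1, C3, C5, C3, C2],
     [C5, C0, C4, C3, C4, C1, C2, C5, C3],
     [C4, C5, C0, C1, C3, C4, C3, C2, C5],
     [C5, C3, C2, C0, C4, C5, C4, C1, C3],
     [C2, C5, C3, C5, C0, C4, C3, C4, C1],
     [C3, C2, C5, C4, C5, C0, C1, C3, C4],
     [C4, C1, C3, C5, C3, C2, C0, C4, C5],
     [C3, C4, C1, C2, C5, C3, C5, C0, C4],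
     [C1, C3, C4, C3, C2, C5, C4, C5, C0]]"

fun isect_2 :: "cls \<Rightarrow> nat per_cls per_cls" where
  "isect_2 C0 = ((1, 0, 0, 0, 0, 0), (0, 0, 1, 0, 0, 0), (0, 1, 0, 0, 0, 0), (0, 0, 0, 2, 0, 0), (0, 0, 0, 0, 0, 2), (0, 0, 0, 0, 2, 0))"
| "isect_2 C1 = ((0, 1, 0, 0, 0, 0), (1, 0, 0, 0, 0, 0), (0, 0, 1, 0, 0, 0), (0, 0, 0, 0, 0, 2), (0, 0, 0, 0, 2, 0), (0, 0, 0, 2, 0, 0))"
| "isect_2 C2 = ((0, 0, 1, 0, 0, 0), (0, 1, 0, 0, 0, 0), (1, 0, 0, 0, 0, 0), (0, 0, 0, 0, 2, 0), (0, 0, 0, 2, 0, 0), (0, 0, 0, 0, 0, 2))"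
| "isect_2 C3 = ((0, 0, 0, 1, 0, 0), (0, 0, 0, 0, 1, 0), (0, 0, 0, 0, 0, 1), (1, 0, 0, 1, 0, 0), (0, 1, 0, 0, 0, 1), (0, 0, 1, 0, 1, 0))"
| "isect_2 C4 = ((0, 0, 0, 0, 1, 0), (0, 0, 0, 0, 0, 1), (0, 0, 0, 1, 0, 0), (0, 0, 1, 0, 1, 0), (1, 0, 0, 1, 0, 0), (0, 1, 0, 0, 0, 1))"
| "isect_2 C5 = ((0, 0, 0, 0, 0, 1), (0, 0, 0, 1, 0, 0), (0, 0, 0, 0, 1, 0), (0, 1, 0, 0, 0, 1), (0, 0, 1, 0, 1, 0), (1, 0, 0, 1, 0, 0))"

definition eig_2 :: "eis list list" where
  "eig_2 =
    [[(1, 0), (1, 0), (1, 0), (2, 0), (2, 0), (2, 0)],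
     [(1, 0), (0, 1), (-1, -1), (2, 0), (-2, -2), (0, 2)],
     [(1, 0), (-1, -1), (0, 1), (2, 0), (0, 2), (-2, -2)],
     [(1, 0), (1, 0), (1, 0), (-1, 0), (-1, 0), (-1, 0)],
     [(1, 0), (0, 1), (-1, -1), (-1, 0), (1, 1), (0, -1)],
     [(1, 0), (-1, -1), (0, 1), (-1, 0), (0, -1), (1, 1)]]"

definition idem_2 :: "eis per_cls list" where
  "idem_2 =
    [((6, 0), (6, 0), (6, 0), (6, 0), (6, 0), (6, 0)),
     ((6, 0), (-6, -6), (0, 6), (6, 0), (0, 6), (-6, -6)),
     ((6, 0), (0, 6), (-6, -6), (6, 0), (-6, -6), (0, 6)),
     ((12, 0), (12, 0), (12, 0), (-6, 0), (-6, 0), (-6, 0)),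
     ((12, 0), (-12, -12), (0, 12), (-6, 0), (0, -6), (6, 6)),
     ((12, 0), (0, 12), (-12, -12), (-6, 0), (6, 6), (0, -6))]"

definition factor_cols_2 :: "nat list list" where
  "factor_cols_2 =
    [[0],
     [0],
     [0],
     [0, 1],
     [0, 1],
     [0, 1]]"

definition factor_rows_2 :: "eis list list list" where
  "factor_rows_2 =
    [[[(1, 0)],
      [(1, 0)],
      [(1, 0)],
      [(1, 0)],
      [(1, 0)],
      [(1, 0)],
      [(1, 0)],
      [(1, 0)],
      [(1, 0)]],
     [[(1, 0)],
      [(0, 1)],
      [(-1, -1)],
      [(0, 1)],
      [(-1, -1)],
      [(1, 0)],
      [(-1, -1)],
      [(1, 0)],
      [(0, 1)]],
     [[(1, 0)],
      [(-1, -1)],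
      [(0, 1)],
      [(-1, -1)],
      [(0, 1)],
      [(1, 0)],
      [(0, 1)],
      [(1, 0)],
      [(-1, -1)]],
     [[(1, 0), (0, 0)],
      [(0, 0), (1, 0)],
      [(-1, 0), (-1, 0)],
      [(-1, 0), (-1, 0)],
      [(1, 0), (0, 0)],
      [(0, 0), (1, 0)],
      [(0, 0), (1, 0)],
      [(-1, 0), (-1, 0)],
      [(1, 0), (0, 0)]],
     [[(1, 0), (0, 0)],
      [(0, 0), (1, 0)],
      [(1, 1), (0, -1)],
      [(0, -1), (-1, 0)],
      [(-1, -1), (0, 0)],
      [(0, 0), (-1, -1)],
      [(0, 0), (0, 1)],
      [(-1, 0), (1, 1)],
      [(0, 1), (0, 0)]],
     [[(1, 0), (0, 0)],
      [(0, 0), (1, 0)],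
      [(0, -1), (1, 1)],
      [(1, 1), (-1, 0)],
      [(0, 1), (0, 0)],
      [(0, 0), (0, 1)],
      [(0, 0), (-1, -1)],
      [(-1, 0), (0, -1)],
      [(-1, -1), (0, 0)]]]"

definition cls_table_3 :: "cls list list" where
  "cls_table_3 =
    [[C0, C4, C5, C4, C1, C3, C5, C3, C2, C3, C5, C4, C3, C5, C4, C3, C5, C4, C3, C5, C4, C3, C5, C4, C3, C5, C4],
     [C5, C0, C4, C3, C4, C1, C2, C5, C3, C4, C3, C5, C3, C5, C4, C4, C3, C5, C3, C5, C4, C4, C3, C5, C3, C5, C4],
     [C4, C5, C0, C1, C3, C4, C3, C2, C5, C5, C4, C3, C3, C5, C4, C5, C4, C3, C3, C5, C4, C5, C4, C3, C3, C5, C4],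
     [C5, C3, C2, C0, C4, C5, C4, C1, C3, C3, C5, C4, C4, C3, C5, C3, C5, C4, C4, C3, C5, C3, C5, C4, C4, C3, C5],
     [C2, C5, C3, C5, C0, C4, C3, C4, C1, C4, C3, C5, C4, C3, C5, C4, C3, C5, C4, C3, C5, C4, C3, C5, C4, C3, C5],
     [C3, C2, C5, C4, C5, C0, C1, C3, C4, C5, C4, C3, C4, C3, C5, C5, C4, C3, C4, C3, C5, C5, C4, C3, C4, C3, C5],
     [C4, C1, C3, C5, C3, C2, C0, C4, C5, C3, C5, C4, C5, C4, C3, C3, C5, C4, C5, C4, C3, C3, C5, C4, C5, C4, C3],
     [C3, C4, C1, C2, C5, C3, C5, C0, C4, C4, C3, C5, C5, C4, C3, C4, C3, C5, C5, C4, C3, C4, C3, C5, C5, C4, C3],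
     [C1, C3, C4, C3, C2, C5, C4, C5, C0, C5, C4, C3, C5, C4, C3, C5, C4, C3, C5, C4, C3, C5, C4, C3, C5, C4, C3],
     [C3, C5, C4, C3, C5, C4, C3, C5, C4, C0, C4, C5, C3, C3, C3, C4, C1, C3, C5, C5, C5, C5, C3, C2, C4, C4, C4],
     [C4, C3, C5, C4, C3, C5, C4, C3, C5, C5, C0, C4, C3, C3, C3, C3, C4, C1, C5, C5, C5, C2, C5, C3, C4, C4, C4],
     [C5, C4, C3, C5, C4, C3, C5, C4, C3, C4, C5, C0, C3, C3, C3, C1, C3, C4, C5, C5, C5, C3, C2, C5, C4, C4, C4],
     [C3, C3, C3, C5, C5, C5, C4, C4, C4, C3, C3, C3, C0, C4, C5, C5, C5, C5, C4, C1, C3, C4, C4, C4, C5, C3, C2],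
     [C4, C4, C4, C3, C3, C3, C5, C5, C5, C3, C3, C3, C5, C0, C4, C5, C5, C5, C3, C4, C1, C4, C4, C4, C2, C5, C3],
     [C5, C5, C5, C4, C4, C4, C3, C3, C3, C3, C3, C3, C4, C5, C0, C5, C5, C5, C1, C3, C4, C4, C4, C4, C3, C2, C5],
     [C3, C5, C4, C3, C5, C4, C3, C5, C4, C5, C3, C2, C4, C4, C4, C0, C4, C5, C3, C3, C3, C4, C1, C3, C5, C5, C5],
     [C4, C3, C5, C4, C3, C5, C4, C3, C5, C2, C5, C3, C4, C4, C4, C5, C0, C4, C3, C3, C3, C3, C4, C1, C5, C5, C5],
     [C5, C4, C3, C5, C4, C3, C5, C4, C3, C3, C2, C5, C4, C4, C4, C4, C5, C0, C3, C3, C3, C1, C3, C4, C5, C5, C5],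
     [C3, C3, C3, C5, C5, C5, C4, C4, C4, C4, C4, C4, C5, C3, C2, C3, C3, C3, C0, C4, C5, C5, C5, C5, C4, C1, C3],
     [C4, C4, C4, C3, C3, C3, C5, C5, C5, C4, C4, C4, C2, C5, C3, C3, C3, C3, C5, C0, C4, C5, C5, C5, C3, C4, C1],
     [C5, C5, C5, C4, C4, C4, C3, C3, C3, C4, C4, C4, C3, C2, C5, C3, C3, C3, C4, C5, C0, C5, C5, C5, C1, C3, C4],
     [C3, C5, C4, C3, C5, C4, C3, C5, C4, C4, C1, C3, C5, C5, C5, C5, C3, C2, C4, C4, C4, C0, C4, C5, C3, C3, C3],
     [C4, C3, C5, C4, C3, C5, C4, C3, C5, C3, C4, C1, C5, C5, C5, C2, C5, C3, C4, C4, C4, C5, C0, C4, C3, C3, C3],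
     [C5, C4, C3, C5, C4, C3, C5, C4, C3, C1, C3, C4, C5, C5, C5, C3, C2, C5, C4, C4, C4, C4, C5, C0, C3, C3, C3],
     [C3, C3, C3, C5, C5, C5, C4, C4, C4, C5, C5, C5, C4, C1, C3, C4, C4, C4, C5, C3, C2, C3, C3, C3, C0, C4, C5],
     [C4, C4, C4, C3, C3, C3, C5, C5, C5, C5, C5, C5, C3, C4, C1, C4, C4, C4, C2, C5, C3, C3, C3, C3, C5, C0, C4],
     [C5, C5, C5, C4, C4, C4, C3, C3, C3, C5, C5, C5, C1, C3, C4, C4, C4, C4, C3, C2, C5, C3, C3, C3, C4, C5, C0]]"

fun isect_3 :: "cls \<Rightarrow> nat per_cls per_cls" where
  "isect_3 C0 = ((1, 0, 0, 0, 0, 0), (0, 0, 1, 0, 0, 0), (0, 1, 0, 0, 0, 0), (0, 0, 0, 8, 0, 0), (0, 0, 0, 0, 0, 8), (0, 0, 0, 0, 8, 0))"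
| "isect_3 C1 = ((0, 1, 0, 0, 0, 0), (1, 0, 0, 0, 0, 0), (0, 0, 1, 0, 0, 0), (0, 0, 0, 0, 0, 8), (0, 0, 0, 0, 8, 0), (0, 0, 0, 8, 0, 0))"
| "isect_3 C2 = ((0, 0, 1, 0, 0, 0), (0, 1, 0, 0, 0, 0), (1, 0, 0, 0, 0, 0), (0, 0, 0, 0, 8, 0), (0, 0, 0, 8, 0, 0), (0, 0, 0, 0, 0, 8))"
| "isect_3 C3 = ((0, 0, 0, 1, 0, 0), (0, 0, 0, 0, 1, 0), (0, 0, 0, 0, 0, 1), (1, 0, 0, 1, 3, 3), (0, 1, 0, 3, 3, 1), (0, 0, 1, 3, 1, 3))"
| "isect_3 C4 = ((0, 0, 0, 0, 1, 0), (0, 0, 0, 0, 0, 1), (0, 0, 0, 1, 0, 0), (0, 0, 1, 3, 1, 3), (1, 0, 0, 1, 3, 3), (0, 1, 0, 3, 3, 1))"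
| "isect_3 C5 = ((0, 0, 0, 0, 0, 1), (0, 0, 0, 1, 0, 0), (0, 0, 0, 0, 1, 0), (0, 1, 0, 3, 3, 1), (0, 0, 1, 3, 1, 3), (1, 0, 0, 1, 3, 3))"

definition eig_3 :: "eis list list" where
  "eig_3 =
    [[(1, 0), (1, 0), (1, 0), (8, 0), (8, 0), (8, 0)],
     [(1, 0), (0, 1), (-1, -1), (-4, 0), (4, 4), (0, -4)],
     [(1, 0), (-1, -1), (0, 1), (-4, 0), (0, -4), (4, 4)],
     [(1, 0), (1, 0), (1, 0), (-1, 0), (-1, 0), (-1, 0)],
     [(1, 0), (0, 1), (-1, -1), (2, 0), (-2, -2), (0, 2)],
     [(1, 0), (-1, -1), (0, 1), (2, 0), (0, 2), (-2, -2)]]"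

definition idem_3 :: "eis per_cls list" where
  "idem_3 =
    [((2, 0), (2, 0), (2, 0), (2, 0), (2, 0), (2, 0)),
     ((6, 0), (-6, -6), (0, 6), (-3, 0), (0, -3), (3, 3)),
     ((6, 0), (0, 6), (-6, -6), (-3, 0), (3, 3), (0, -3)),
     ((16, 0), (16, 0), (16, 0), (-2, 0), (-2, 0), (-2, 0)),
     ((12, 0), (-12, -12), (0, 12), (3, 0), (0, 3), (-3, -3)),
     ((12, 0), (0, 12), (-12, -12), (3, 0), (-3, -3), (0, 3))]"

definition factor_cols_3 :: "nat list list" where
  "factor_cols_3 =
    [[0],
     [0, 1, 9],
     [0, 1, 9],
     [0, 1, 2, 9, 10, 11, 12, 13],
     [0, 1, 2, 9, 10, 12],
     [0, 1, 2, 9, 10, 12]]"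

definition factor_rows_3 :: "eis list list list" where
  "factor_rows_3 =
    [[[(1, 0)],
      [(1, 0)],
      [(1, 0)],
      [(1, 0)],
      [(1, 0)],
      [(1, 0)],
      [(1, 0)],
      [(1, 0)],
      [(1, 0)],
      [(1, 0)],
      [(1, 0)],
      [(1, 0)],
      [(1, 0)],
      [(1, 0)],
      [(1, 0)],
      [(1, 0)],
      [(1, 0)],
      [(1, 0)],
      [(1, 0)],
      [(1, 0)],
      [(1, 0)],
      [(1, 0)],
      [(1, 0)],
      [(1, 0)],
      [(1, 0)],
      [(1, 0)],
      [(1, 0)]],
     [[(1, 0), (0, 0), (0, 0)],
      [(0, 0), (1, 0), (0, 0)],
      [(1, 1), (0, -1), (0, 0)],
      [(0, -1), (-1, 0), (0, 0)],
      [(-1, -1), (0, 0), (0, 0)],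
      [(0, 0), (-1, -1), (0, 0)],
      [(0, 0), (0, 1), (0, 0)],
      [(-1, 0), (1, 1), (0, 0)],
      [(0, 1), (0, 0), (0, 0)],
      [(0, 0), (0, 0), (1, 0)],
      [(1, 0), (-1, 0), (1, 0)],
      [(0, -1), (0, 1), (1, 0)],
      [(-1, 0), (0, 0), (-1, 0)],
      [(0, 1), (1, 0), (-1, 0)],
      [(0, 0), (0, -1), (-1, 0)],
      [(-1, 0), (1, 0), (-1, -1)],
      [(0, 0), (0, 0), (-1, -1)],
      [(-1, -1), (1, 1), (-1, -1)],
      [(0, 0), (-1, 0), (1, 1)],
      [(1, 1), (0, 0), (1, 1)],
      [(1, 0), (-1, -1), (1, 1)],
      [(0, 1), (0, -1), (0, 1)],
      [(1, 1), (-1, -1), (0, 1)],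
      [(0, 0), (0, 0), (0, 1)],
      [(-1, -1), (0, 1), (0, -1)],
      [(0, 0), (1, 1), (0, -1)],
      [(0, -1), (0, 0), (0, -1)]],
     [[(1, 0), (0, 0), (0, 0)],
      [(0, 0), (1, 0), (0, 0)],
      [(0, -1), (1, 1), (0, 0)],
      [(1, 1), (-1, 0), (0, 0)],
      [(0, 1), (0, 0), (0, 0)],
      [(0, 0), (0, 1), (0, 0)],
      [(0, 0), (-1, -1), (0, 0)],
      [(-1, 0), (0, -1), (0, 0)],
      [(-1, -1), (0, 0), (0, 0)],
      [(0, 0), (0, 0), (1, 0)],
      [(1, 0), (-1, 0), (1, 0)],
      [(1, 1), (-1, -1), (1, 0)],
      [(-1, 0), (0, 0), (-1, 0)],
      [(-1, -1), (1, 0), (-1, 0)],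
      [(0, 0), (1, 1), (-1, 0)],
      [(-1, 0), (1, 0), (0, 1)],
      [(0, 0), (0, 0), (0, 1)],
      [(0, 1), (0, -1), (0, 1)],
      [(0, 0), (-1, 0), (0, -1)],
      [(0, -1), (0, 0), (0, -1)],
      [(1, 0), (0, 1), (0, -1)],
      [(-1, -1), (1, 1), (-1, -1)],
      [(0, -1), (0, 1), (-1, -1)],
      [(0, 0), (0, 0), (-1, -1)],
      [(0, 1), (-1, -1), (1, 1)],
      [(0, 0), (0, -1), (1, 1)],
      [(1, 1), (0, 0), (1, 1)]],
     [[(1, 0), (0, 0), (0, 0), (0, 0), (0, 0), (0, 0), (0, 0), (0, 0)],
      [(0, 0), (1, 0), (0, 0), (0, 0), (0, 0), (0, 0), (0, 0), (0, 0)],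
      [(0, 0), (0, 0), (1, 0), (0, 0), (0, 0), (0, 0), (0, 0), (0, 0)],
      [(0, 0), (0, 0), (1, 0), (0, 0), (0, 0), (0, 0), (0, 0), (0, 0)],
      [(1, 0), (0, 0), (0, 0), (0, 0), (0, 0), (0, 0), (0, 0), (0, 0)],
      [(0, 0), (1, 0), (0, 0), (0, 0), (0, 0), (0, 0), (0, 0), (0, 0)],
      [(0, 0), (1, 0), (0, 0), (0, 0), (0, 0), (0, 0), (0, 0), (0, 0)],
      [(0, 0), (0, 0), (1, 0), (0, 0), (0, 0), (0, 0), (0, 0), (0, 0)],
      [(1, 0), (0, 0), (0, 0), (0, 0), (0, 0), (0, 0), (0, 0), (0, 0)],
      [(0, 0), (0, 0), (0, 0), (1, 0), (0, 0), (0, 0), (0, 0), (0, 0)],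
      [(0, 0), (0, 0), (0, 0), (0, 0), (1, 0), (0, 0), (0, 0), (0, 0)],
      [(0, 0), (0, 0), (0, 0), (0, 0), (0, 0), (1, 0), (0, 0), (0, 0)],
      [(0, 0), (0, 0), (0, 0), (0, 0), (0, 0), (0, 0), (1, 0), (0, 0)],
      [(0, 0), (0, 0), (0, 0), (0, 0), (0, 0), (0, 0), (0, 0), (1, 0)],
      [(-1, 0), (-1, 0), (-1, 0), (-1, 0), (-1, 0), (-1, 0), (-1, 0), (-1, 0)],
      [(0, 0), (0, 0), (0, 0), (0, 0), (0, 0), (1, 0), (0, 0), (0, 0)],
      [(0, 0), (0, 0), (0, 0), (1, 0), (0, 0), (0, 0), (0, 0), (0, 0)],
      [(0, 0), (0, 0), (0, 0), (0, 0), (1, 0), (0, 0), (0, 0), (0, 0)],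
      [(-1, 0), (-1, 0), (-1, 0), (-1, 0), (-1, 0), (-1, 0), (-1, 0), (-1, 0)],
      [(0, 0), (0, 0), (0, 0), (0, 0), (0, 0), (0, 0), (1, 0), (0, 0)],
      [(0, 0), (0, 0), (0, 0), (0, 0), (0, 0), (0, 0), (0, 0), (1, 0)],
      [(0, 0), (0, 0), (0, 0), (0, 0), (1, 0), (0, 0), (0, 0), (0, 0)],
      [(0, 0), (0, 0), (0, 0), (0, 0), (0, 0), (1, 0), (0, 0), (0, 0)],
      [(0, 0), (0, 0), (0, 0), (1, 0), (0, 0), (0, 0), (0, 0), (0, 0)],
      [(0, 0), (0, 0), (0, 0), (0, 0), (0, 0), (0, 0), (0, 0), (1, 0)],
      [(-1, 0), (-1, 0), (-1, 0), (-1, 0), (-1, 0), (-1, 0), (-1, 0), (-1, 0)],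
      [(0, 0), (0, 0), (0, 0), (0, 0), (0, 0), (0, 0), (1, 0), (0, 0)]],
     [[(1, 0), (0, 0), (0, 0), (0, 0), (0, 0), (0, 0)],
      [(0, 0), (1, 0), (0, 0), (0, 0), (0, 0), (0, 0)],
      [(0, 0), (0, 0), (1, 0), (0, 0), (0, 0), (0, 0)],
      [(0, 0), (0, 0), (-1, -1), (0, 0), (0, 0), (0, 0)],
      [(-1, -1), (0, 0), (0, 0), (0, 0), (0, 0), (0, 0)],
      [(0, 0), (-1, -1), (0, 0), (0, 0), (0, 0), (0, 0)],
      [(0, 0), (0, 1), (0, 0), (0, 0), (0, 0), (0, 0)],
      [(0, 0), (0, 0), (0, 1), (0, 0), (0, 0), (0, 0)],
      [(0, 1), (0, 0), (0, 0), (0, 0), (0, 0), (0, 0)],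
      [(0, 0), (0, 0), (0, 0), (1, 0), (0, 0), (0, 0)],
      [(0, 0), (0, 0), (0, 0), (0, 0), (1, 0), (0, 0)],
      [(0, 1), (-1, -1), (1, 0), (0, -1), (1, 1), (0, 0)],
      [(0, 0), (0, 0), (0, 0), (0, 0), (0, 0), (1, 0)],
      [(0, 0), (-1, -1), (0, -1), (0, -1), (1, 0), (0, 1)],
      [(0, 1), (0, 0), (1, 1), (1, 0), (1, 1), (-1, -1)],
      [(1, 0), (0, 1), (-1, -1), (-1, 0), (0, -1), (0, 0)],
      [(0, 0), (0, 0), (0, 0), (-1, -1), (0, 0), (0, 0)],
      [(0, 0), (0, 0), (0, 0), (0, 0), (-1, -1), (0, 0)],
      [(1, 0), (0, 0), (0, -1), (-1, -1), (0, -1), (0, 1)],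
      [(0, 0), (0, 0), (0, 0), (0, 0), (0, 0), (-1, -1)],
      [(0, 0), (0, 1), (-1, 0), (-1, 0), (-1, -1), (1, 0)],
      [(0, 0), (0, 0), (0, 0), (0, 0), (0, 1), (0, 0)],
      [(-1, -1), (1, 0), (0, 1), (1, 1), (-1, 0), (0, 0)],
      [(0, 0), (0, 0), (0, 0), (0, 1), (0, 0), (0, 0)],
      [(0, 0), (1, 0), (1, 1), (1, 1), (0, 1), (-1, -1)],
      [(-1, -1), (0, 0), (-1, 0), (0, 1), (-1, 0), (1, 0)],
      [(0, 0), (0, 0), (0, 0), (0, 0), (0, 0), (0, 1)]],
     [[(1, 0), (0, 0), (0, 0), (0, 0), (0, 0), (0, 0)],
      [(0, 0), (1, 0), (0, 0), (0, 0), (0, 0), (0, 0)],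
      [(0, 0), (0, 0), (1, 0), (0, 0), (0, 0), (0, 0)],
      [(0, 0), (0, 0), (0, 1), (0, 0), (0, 0), (0, 0)],
      [(0, 1), (0, 0), (0, 0), (0, 0), (0, 0), (0, 0)],
      [(0, 0), (0, 1), (0, 0), (0, 0), (0, 0), (0, 0)],
      [(0, 0), (-1, -1), (0, 0), (0, 0), (0, 0), (0, 0)],
      [(0, 0), (0, 0), (-1, -1), (0, 0), (0, 0), (0, 0)],
      [(-1, -1), (0, 0), (0, 0), (0, 0), (0, 0), (0, 0)],
      [(0, 0), (0, 0), (0, 0), (1, 0), (0, 0), (0, 0)],
      [(0, 0), (0, 0), (0, 0), (0, 0), (1, 0), (0, 0)],
      [(-1, -1), (0, 1), (1, 0), (1, 1), (0, -1), (0, 0)],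
      [(0, 0), (0, 0), (0, 0), (0, 0), (0, 0), (1, 0)],
      [(0, 0), (0, 1), (1, 1), (1, 1), (1, 0), (-1, -1)],
      [(-1, -1), (0, 0), (0, -1), (1, 0), (0, -1), (0, 1)],
      [(1, 0), (-1, -1), (0, 1), (-1, 0), (1, 1), (0, 0)],
      [(0, 0), (0, 0), (0, 0), (0, 1), (0, 0), (0, 0)],
      [(0, 0), (0, 0), (0, 0), (0, 0), (0, 1), (0, 0)],
      [(1, 0), (0, 0), (1, 1), (0, 1), (1, 1), (-1, -1)],
      [(0, 0), (0, 0), (0, 0), (0, 0), (0, 0), (0, 1)],
      [(0, 0), (-1, -1), (-1, 0), (-1, 0), (0, 1), (1, 0)],
      [(0, 0), (0, 0), (0, 0), (0, 0), (-1, -1), (0, 0)],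
      [(0, 1), (1, 0), (-1, -1), (0, -1), (-1, 0), (0, 0)],
      [(0, 0), (0, 0), (0, 0), (-1, -1), (0, 0), (0, 0)],
      [(0, 0), (1, 0), (0, -1), (0, -1), (-1, -1), (0, 1)],
      [(0, 1), (0, 0), (-1, 0), (-1, -1), (-1, 0), (1, 0)],
      [(0, 0), (0, 0), (0, 0), (0, 0), (0, 0), (-1, -1)]]]"

interpretation GU2: scheme_certificate 2 9 cls_table_2 isect_2 eig_2 54 idem_2 "[1, 1, 1, 2, 2, 2]"
    factor_cols_2 factor_rows_2
  by unfold_locales code_simp+

interpretation GU3: scheme_certificate 3 27 cls_table_3 isect_3 eig_3 54 idem_3 "[1, 3, 3, 8, 6, 6]"
    factor_cols_3 factor_rows_3
  by unfold_locales code_simp+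

lemma char_table_2: "map (map eis_val) eig_2 = P \<Longrightarrow> char_table 2 P [1, 1, 1, 2, 2, 2]"
  using GU2.char_table by simp

lemma char_table_3: "map (map eis_val) eig_3 = P \<Longrightarrow> char_table 3 P [1, 3, 3, 8, 6, 6]"
  using GU3.char_table by simp

theorem mainTheorem16:
  shows "char_table 2
           [[1, 1, 1, 2, 2, 2],
            [1, omega, cnj omega, 2, 2 * cnj omega, 2 * omega],
            [1, cnj omega, omega, 2, 2 * omega, 2 * cnj omega],
            [1, 1, 1, -1, -1, -1],
            [1, omega, cnj omega, -1, - cnj omega, - omega],
            [1, cnj omega, omega, -1, - omega, - cnj omega]]
           [1, 1, 1, 2, 2, 2]
       \<and> char_table 3
           [[1, 1, 1, 8, 8, 8],
            [1, omega, cnj omega, -4, -4 * cnj omega, -4 * omega],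
            [1, cnj omega, omega, -4, -4 * omega, -4 * cnj omega],
            [1, 1, 1, -1, -1, -1],
            [1, omega, cnj omega, 2, 2 * cnj omega, 2 * omega],
            [1, cnj omega, omega, 2, 2 * omega, 2 * cnj omega]]
           [1, 3, 3, 8, 6, 6]"
  by (intro conjI char_table_2 char_table_3) (simp_all add: eig_2_def eig_3_def cnj_omega algebra_simps)

end
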